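(* Let $n\geqslant 4$ and let $S$ be an independent set of vertices of the alternating group graph $AG_n$. (1) If $|S|=3$, then $|N(S)|\geqslant 6n-16$. (2) If $|S|=4$, then $|N(S)|\geqslant 8n-24$.
   Context: For $n\geqslant 3$, permutations $p=p_1\cdots p_n$ of $\{1,\dots,n\}$ are written as words; $\mathcal A_n$ is the set of even permutations. For $3\leqslant i\leqslant n$, $p\,\mathrm{g}_i^+$ is obtained from $p$ by placing $p_i,p_1,p_2$ at positions $1,2,i$ respectively (others unchanged), and $p\,\mathrm{g}_i^-$ by placing $p_2,p_i,p_1$ at positions $1,2,i$. $AG_n$ has vertex set $\mathcal A_n$, with $p,q$ adjacent iff $q\in\{p\mathrm{g}_i^+,p\mathrm{g}_i^-\}$ for some $i\in\{3,\dots,n\}$. For a vertex set $S$, $N(S)$ is the set of vertices not in $S$ adjacent to at least one vertex of $S$. *)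

theory Defs
  imports "HOL-Combinatorics.Permutations"
begin

text \<open>A permutation p of {1..n} is represented as a function p :: nat => nat with
  p permutes {1..n}; its word is p 1 p 2 ... p n (so p_i = p i).\<close>

definition alt_perms :: "nat \<Rightarrow> (nat \<Rightarrow> nat) set" where
  "alt_perms n = {p. p permutes {1..n} \<and> evenperm p}"

definition gplus :: "nat \<Rightarrow> (nat \<Rightarrow> nat) \<Rightarrow> (nat \<Rightarrow> nat)" where
  "gplus i p = (\<lambda>k. if k = 1 then p i else if k = 2 then p 1 else if k = i then p 2 else p k)"

definition gminus :: "nat \<Rightarrow> (nat \<Rightarrow> nat) \<Rightarrow> (nat \<Rightarrow> nat)" where
  "gminus i p = (\<lambda>k. if k = 1 then p 2 else if k = 2 then p i else if k = i then p 1 else p k)"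

definition AG_adj :: "nat \<Rightarrow> (nat \<Rightarrow> nat) \<Rightarrow> (nat \<Rightarrow> nat) \<Rightarrow> bool" where
  "AG_adj n p q \<longleftrightarrow> p \<in> alt_perms n \<and> q \<in> alt_perms n \<and>
     (\<exists>i\<in>{3..n}. q = gplus i p \<or> q = gminus i p)"

definition AG_indep :: "nat \<Rightarrow> (nat \<Rightarrow> nat) set \<Rightarrow> bool" where
  "AG_indep n S \<longleftrightarrow> S \<subseteq> alt_perms n \<and> (\<forall>p\<in>S. \<forall>q\<in>S. \<not> AG_adj n p q)"

definition AG_nbhd :: "nat \<Rightarrow> (nat \<Rightarrow> nat) set \<Rightarrow> (nat \<Rightarrow> nat) set" where
  "AG_nbhd n S = {q \<in> alt_perms n. q \<notin> S \<and> (\<exists>p\<in>S. AG_adj n p q)}"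

end

theory Submission
  imports Defs
begin

text \<open>
  An even permutation r is adjacent to p iff r \<noteq> p and r agrees with p outside {1, 2, i} for
  some i \<ge> 3, since the only even permutations of three positions are the identity and the two
  3-cycles; so every vertex has 2(n - 2) neighbours. A common neighbour of two distinct
  non-adjacent vertices p, q is determined by the position i at which it takes the value q i,
  and i is one of the only two positions \<ge> 3 where p and q differ; hence p and q have at most
  two common neighbours. If p has two common neighbours with q and two with s, then q and s
  both arise from p by moving the entries at positions 1 and 2 elsewhere, and a direct
  analysis shows that every common neighbour of q and s is adjacent to p. Inclusion-exclusion
  then gives |N(S)| \<ge> 6(n - 2) - 4 for |S| = 3, and averaging this bound over the four
  3-subsets of a 4-set S gives |N(S)| \<ge> 8(n - 2) - 8.
\<close>

definition agree_off :: "'a set \<Rightarrow> ('a \<Rightarrow> 'b) \<Rightarrow> ('a \<Rightarrow> 'b) \<Rightarrow> bool" where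
  "agree_off A f g \<longleftrightarrow> (\<forall>k. k \<notin> A \<longrightarrow> f k = g k)"

lemma agree_offD: "agree_off A f g \<Longrightarrow> k \<notin> A \<Longrightarrow> f k = g k"
  by (simp add: agree_off_def)

lemma alt_perms_D:
  assumes "p \<in> alt_perms n"
  shows "p permutes {1..n}" "evenperm p" "permutation p" "inj p" "surj p"
  using assms by (auto simp: alt_perms_def permutes_imp_permutation[OF finite_atLeastAtMost]
      permutes_inj permutes_surj)

lemma alt_perms_comp:
  assumes "p \<in> alt_perms n" "\<sigma> permutes {1..n}" "evenperm \<sigma>"
  shows "p \<circ> \<sigma> \<in> alt_perms n"
  using assms alt_perms_D[OF assms(1)] permutes_compose[of \<sigma> _ p]
  by (simp add: alt_perms_def evenperm_comp permutes_imp_permutation[OF finite_atLeastAtMost])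

lemma alt_perms_comp_transpose:
  assumes "p \<in> alt_perms n" "a \<noteq> b"
  shows "p \<circ> transpose a b \<notin> alt_perms n"
  using assms alt_perms_D[OF assms(1)]
  by (simp add: alt_perms_def evenperm_comp permutation_swap_id evenperm_swap)

lemma evenperm_transpose_comp_transpose:
  "a \<noteq> b \<Longrightarrow> c \<noteq> d \<Longrightarrow> evenperm (transpose a b \<circ> transpose c d)"
  by (simp add: evenperm_comp permutation_swap_id evenperm_swap)

lemma gplus_eq_comp: "i \<ge> 3 \<Longrightarrow> gplus i p = p \<circ> (transpose 1 i \<circ> transpose 2 i)"
  by (auto simp: gplus_def transpose_def fun_eq_iff)

lemma gminus_eq_comp: "i \<ge> 3 \<Longrightarrow> gminus i p = p \<circ> (transpose 2 i \<circ> transpose 1 i)"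
  by (auto simp: gminus_def transpose_def fun_eq_iff)

lemma gplus_in_alt_perms: "p \<in> alt_perms n \<Longrightarrow> i \<in> {3..n} \<Longrightarrow> gplus i p \<in> alt_perms n"
  by (simp add: gplus_eq_comp alt_perms_comp permutes_compose permutes_swap_id
      evenperm_transpose_comp_transpose)

lemma gminus_in_alt_perms: "p \<in> alt_perms n \<Longrightarrow> i \<in> {3..n} \<Longrightarrow> gminus i p \<in> alt_perms n"
  by (simp add: gminus_eq_comp alt_perms_comp permutes_compose permutes_swap_id
      evenperm_transpose_comp_transpose)

lemma agree_off_image:
  assumes "inj r" "surj p" "agree_off A r p" "k \<in> A"
  shows "r k \<in> p ` A"
proof -
  obtain m where m: "r k = p m" using \<open>surj p\<close> by (metis surjD)
  have "m \<in> A"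
  proof (rule ccontr)
    assume "m \<notin> A"
    then have "r m = r k" using m \<open>agree_off A r p\<close> by (simp add: agree_off_def)
    then show False using \<open>m \<notin> A\<close> \<open>k \<in> A\<close> \<open>inj r\<close> by (metis injD)
  qed
  then show ?thesis using m by simp
qed

lemma agree_off_triple_cases:
  assumes p: "p \<in> alt_perms n" and r: "r \<in> alt_perms n" and i: "i \<ge> 3"
    and agree: "agree_off {1,2,i} r p" and "r \<noteq> p"
  shows "r = gplus i p \<or> r = gminus i p"
proof -
  have r_eq: "r = f" if "f 1 = r 1" "f 2 = r 2" "f i = r i" "\<And>k. k \<notin> {1,2,i} \<Longrightarrow> f k = p k"
    for f
  proof (rule ext)
    fix k
    show "r k = f k"
      using agree that by (cases "k \<in> {1,2,i}") (auto simp: agree_off_def)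
  qed
  have "r 1 \<in> {p 1, p 2, p i}" "r 2 \<in> {p 1, p 2, p i}" "r i \<in> {p 1, p 2, p i}"
    using agree_off_image[OF alt_perms_D(4)[OF r] alt_perms_D(5)[OF p] agree] by auto
  moreover have "r 1 \<noteq> r 2" "r 1 \<noteq> r i" "r 2 \<noteq> r i" "p 1 \<noteq> p 2" "p 1 \<noteq> p i" "p 2 \<noteq> p i"
    using i alt_perms_D(4)[OF r] alt_perms_D(4)[OF p] by (auto simp: inj_eq)
  ultimately consider "r 1 = p 1" "r 2 = p 2" "r i = p i" | "r 1 = p 2" "r 2 = p 1" "r i = p i"
    | "r 1 = p i" "r 2 = p 2" "r i = p 1" | "r 1 = p 1" "r 2 = p i" "r i = p 2"
    | "r 1 = p i" "r 2 = p 1" "r i = p 2" | "r 1 = p 2" "r 2 = p i" "r i = p 1"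
    by (elim insertE emptyE; metis)
  then show ?thesis
  proof cases
    case 1
    then have "r = p" using i by (intro r_eq) auto
    then show ?thesis using \<open>r \<noteq> p\<close> by blast
  next
    case 2
    then have "r = p \<circ> transpose 1 2" using i by (intro r_eq) (auto simp: transpose_def)
    then show ?thesis using alt_perms_comp_transpose[OF p] r by auto
  next
    case 3
    then have "r = p \<circ> transpose 1 i" using i by (intro r_eq) (auto simp: transpose_def)
    then show ?thesis using alt_perms_comp_transpose[OF p] r i by auto
  next
    case 4
    then have "r = p \<circ> transpose 2 i" using i by (intro r_eq) (auto simp: transpose_def)
    then show ?thesis using alt_perms_comp_transpose[OF p] r i by auto
  next
    case 5
    then show ?thesis using i by (intro disjI1 r_eq) (auto simp: gplus_def)
  next
    case 6
    then show ?thesis using i by (intro disjI2 r_eq) (auto simp: gminus_def)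
  qed
qed

lemma gplus_agree_off: "agree_off {1,2,i} (gplus i p) p"
  by (auto simp: agree_off_def gplus_def)

lemma gminus_agree_off: "agree_off {1,2,i} (gminus i p) p"
  by (auto simp: agree_off_def gminus_def)

lemma gplus_neq: "inj p \<Longrightarrow> i \<ge> 3 \<Longrightarrow> gplus i p \<noteq> p"
  by (auto dest: fun_cong[where x = 2] simp: gplus_def inj_eq)

lemma gminus_neq: "inj p \<Longrightarrow> i \<ge> 3 \<Longrightarrow> gminus i p \<noteq> p"
  by (auto dest: fun_cong[where x = 1] simp: gminus_def inj_eq)

lemma AG_adj_iff_agree_off:
  "AG_adj n p r \<longleftrightarrow> p \<in> alt_perms n \<and> r \<in> alt_perms n \<and> r \<noteq> p \<and>
     (\<exists>i\<in>{3..n}. agree_off {1,2,i} r p)"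
proof
  assume "AG_adj n p r"
  then show "p \<in> alt_perms n \<and> r \<in> alt_perms n \<and> r \<noteq> p \<and> (\<exists>i\<in>{3..n}. agree_off {1,2,i} r p)"
    unfolding AG_adj_def
    using gplus_neq gminus_neq gplus_agree_off gminus_agree_off alt_perms_D(4)
    by (metis atLeastAtMost_iff)
next
  assume "p \<in> alt_perms n \<and> r \<in> alt_perms n \<and> r \<noteq> p \<and> (\<exists>i\<in>{3..n}. agree_off {1,2,i} r p)"
  then show "AG_adj n p r"
    unfolding AG_adj_def using agree_off_triple_cases by fastforce
qed

lemma AG_adj_agree_off_cases:
  assumes "AG_adj n p r" "i \<in> {3..n}" "agree_off {1,2,i} r p"
  shows "r = gplus i p \<or> r = gminus i p"
  using assms agree_off_triple_cases by (auto simp: AG_adj_iff_agree_off)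

lemma AG_adj_value:
  assumes "AG_adj n p r" "i \<in> {3..n}" "agree_off {1,2,i} r p"
  shows "r i \<in> {p 1, p 2}"
  using AG_adj_agree_off_cases[OF assms] assms(2) by (auto simp: gplus_def gminus_def)

lemma AG_adj_determined:
  assumes "AG_adj n p r" "i \<in> {3..n}" "agree_off {1,2,i} r p"
  shows "r = (if r i = p 2 then gplus i p else gminus i p)"
proof -
  have "p 1 \<noteq> p 2"
    using assms(1) alt_perms_D(4) by (auto simp: AG_adj_def inj_eq)
  then show ?thesis
    using AG_adj_agree_off_cases[OF assms] assms(2) by (auto simp: gplus_def gminus_def)
qed

definition AG_nbrs :: "nat \<Rightarrow> (nat \<Rightarrow> nat) \<Rightarrow> (nat \<Rightarrow> nat) set" where
  "AG_nbrs n p = {r. AG_adj n p r}"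

lemma AG_nbrs_eq:
  "p \<in> alt_perms n \<Longrightarrow> AG_nbrs n p = (\<lambda>i. gplus i p) ` {3..n} \<union> (\<lambda>i. gminus i p) ` {3..n}"
  unfolding AG_nbrs_def AG_adj_def using gplus_in_alt_perms gminus_in_alt_perms by auto

lemma finite_AG_nbrs: "p \<in> alt_perms n \<Longrightarrow> finite (AG_nbrs n p)"
  by (simp add: AG_nbrs_eq)

lemma card_AG_nbrs:
  assumes p: "p \<in> alt_perms n"
  shows "card (AG_nbrs n p) = 2 * (n - 2)"
proof -
  have inj: "p a = p b \<longleftrightarrow> a = b" for a b
    using alt_perms_D(4)[OF p] by (simp add: inj_eq)
  have "inj_on (\<lambda>i. gplus i p) {3..n}"
    by (rule inj_onI) (auto dest: fun_cong[where x = 1] simp: gplus_def inj)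
  moreover have "inj_on (\<lambda>i. gminus i p) {3..n}"
    by (rule inj_onI) (auto dest: fun_cong[where x = 2] simp: gminus_def inj)
  moreover have "gplus i p \<noteq> gminus j p" if "i \<ge> 3" for i j
  proof
    assume "gplus i p = gminus j p"
    from fun_cong[OF this, of 1] have "p i = p 2" by (simp add: gplus_def gminus_def)
    then show False using that inj by simp
  qed
  then have "(\<lambda>i. gplus i p) ` {3..n} \<inter> (\<lambda>i. gminus i p) ` {3..n} = {}"
    by fastforce
  ultimately show ?thesis
    unfolding AG_nbrs_eq[OF p] by (simp add: card_Un_disjoint card_image)
qed

lemma AG_indep_subset: "AG_indep n S \<Longrightarrow> T \<subseteq> S \<Longrightarrow> AG_indep n T"
  by (auto simp: AG_indep_def)

lemma AG_common_nbr_indices: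
  assumes indep: "AG_indep n {p, q}" and "p \<noteq> q" and r: "r \<in> AG_nbrs n p \<inter> AG_nbrs n q"
  obtains i j where "i \<in> {3..n}" "j \<in> {3..n}" "i \<noteq> j"
    "agree_off {1,2,i} r p" "agree_off {1,2,j} r q" "agree_off {1,2,i,j} p q"
    "q i \<in> {p 1, p 2}" "p j \<in> {q 1, q 2}" "p i \<noteq> q i"
    "r = (if q i = p 2 then gplus i p else gminus i p)"
proof -
  have rp: "AG_adj n p r" and rq: "AG_adj n q r" using r by (auto simp: AG_nbrs_def)
  obtain i where i: "i \<in> {3..n}" "agree_off {1,2,i} r p"
    using rp by (auto simp: AG_adj_iff_agree_off)
  obtain j where j: "j \<in> {3..n}" "agree_off {1,2,j} r q"
    using rq by (auto simp: AG_adj_iff_agree_off)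
  have "i \<noteq> j"
  proof
    assume "i = j"
    then have "agree_off {1,2,i} q p" using i j by (auto simp: agree_off_def)
    then have "AG_adj n p q"
      using i indep \<open>p \<noteq> q\<close> by (auto simp: AG_adj_iff_agree_off AG_indep_def)
    then show False using indep by (simp add: AG_indep_def)
  qed
  have "r i = q i" "r j = p j" using i j \<open>i \<noteq> j\<close> by (auto simp: agree_off_def)
  moreover have "p i \<notin> {p 1, p 2}" using i alt_perms_D(4) rp by (auto simp: AG_adj_def inj_eq)
  moreover note AG_adj_value[OF rp i] AG_adj_value[OF rq j] AG_adj_determined[OF rp i]
  moreover have "agree_off {1,2,i,j} p q" using i j by (auto simp: agree_off_def)
  ultimately show thesis using that i j \<open>i \<noteq> j\<close> by auto
qed

lemma card_AG_common_nbrs_le: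
  assumes "AG_indep n {p, q}" "p \<noteq> q"
  shows "card (AG_nbrs n p \<inter> AG_nbrs n q) \<le> 2"
proof (cases "AG_nbrs n p \<inter> AG_nbrs n q = {}")
  case False
  then obtain r0 where "r0 \<in> AG_nbrs n p \<inter> AG_nbrs n q" by blast
  then obtain i j where "i \<noteq> j" and pq: "agree_off {1,2,i,j} p q"
    using AG_common_nbr_indices[OF assms] by metis
  define f where "f m = (if q m = p 2 then gplus m p else gminus m p)" for m
  have "AG_nbrs n p \<inter> AG_nbrs n q \<subseteq> f ` {i, j}"
  proof
    fix r assume "r \<in> AG_nbrs n p \<inter> AG_nbrs n q"
    then obtain i' where i': "i' \<in> {3..n}" "p i' \<noteq> q i'" "r = f i'"
      using AG_common_nbr_indices[OF assms] unfolding f_def by metis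
    have "i' \<in> {1,2,i,j}" using i'(2) pq unfolding agree_off_def by blast
    then show "r \<in> f ` {i, j}" using i' by auto
  qed
  then have "card (AG_nbrs n p \<inter> AG_nbrs n q) \<le> card (f ` {i, j})"
    by (intro card_mono) auto
  also have "\<dots> \<le> 2" using card_image_le[of "{i, j}" f] \<open>i \<noteq> j\<close> by simp
  finally show ?thesis .
qed simp

lemma AG_common_nbrs_card_2:
  assumes indep: "AG_indep n {p, q}" and "p \<noteq> q" and two: "card (AG_nbrs n p \<inter> AG_nbrs n q) = 2"
  obtains i j where "i \<in> {3..n}" "j \<in> {3..n}" "i \<noteq> j" "agree_off {1,2,i,j} p q"
    "q i \<in> {p 1, p 2}" "q j \<in> {p 1, p 2}"
proof -
  obtain r r' where r: "r \<in> AG_nbrs n p \<inter> AG_nbrs n q" and r': "r' \<in> AG_nbrs n p \<inter> AG_nbrs n q"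
    and "r \<noteq> r'"
    using two by (auto simp: card_2_iff)
  obtain i j where i: "i \<in> {3..n}" "j \<in> {3..n}" "i \<noteq> j" "agree_off {1,2,i,j} p q"
    "q i \<in> {p 1, p 2}" "r = (if q i = p 2 then gplus i p else gminus i p)"
    using AG_common_nbr_indices[OF indep \<open>p \<noteq> q\<close> r] by metis
  obtain i' where i': "i' \<in> {3..n}" "p i' \<noteq> q i'" "q i' \<in> {p 1, p 2}"
    "r' = (if q i' = p 2 then gplus i' p else gminus i' p)"
    using AG_common_nbr_indices[OF indep \<open>p \<noteq> q\<close> r'] by metis
  have "i' \<in> {1,2,i,j}" using i'(2) i(4) unfolding agree_off_def by blast
  moreover have "i' \<noteq> i" using i(6) i'(4) \<open>r \<noteq> r'\<close> by auto
  ultimately have "i' = j" using i' by auto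
  then show thesis using that i i' by blast
qed

text \<open>In the intended reading, q and s arise from p by moving the entries at positions 1 and 2
  to two other positions, and w is a common neighbour of q and s.\<close>
lemma agree_off_common_nbr:
  fixes p q s w :: "nat \<Rightarrow> nat"
  assumes inj: "inj p" "inj q" "inj s"
    and ge3: "3 \<le> i" "3 \<le> j" "3 \<le> k" "3 \<le> l" "3 \<le> u" "3 \<le> v"
    and "i \<noteq> j" "k \<noteq> l" "u \<noteq> v"
    and pq: "agree_off {1,2,i,j} p q" "q i \<in> {p 1, p 2}" "q j \<in> {p 1, p 2}"
    and ps: "agree_off {1,2,k,l} p s" "s k \<in> {p 1, p 2}" "s l \<in> {p 1, p 2}"
    and wq: "agree_off {1,2,u} w q" and ws: "agree_off {1,2,v} w s"
    and su: "s u \<in> {q 1, q 2}" and qv: "q v \<in> {s 1, s 2}"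
  shows "\<exists>c\<in>{i,j}. agree_off {1,2,c} w p \<and> w c \<noteq> p c"
proof -
  have "q i \<noteq> q j" "s k \<noteq> s l" using inj \<open>i \<noteq> j\<close> \<open>k \<noteq> l\<close> by (simp_all add: inj_eq)
  then have Pq: "{p 1, p 2} = q ` {i,j}" and Ps: "{p 1, p 2} = s ` {k,l}"
    using pq(2,3) ps(2,3) by auto
  have q12: "q 1 \<notin> q ` {i,j}" "q 2 \<notin> q ` {i,j}" and s12: "s 1 \<notin> s ` {k,l}" "s 2 \<notin> s ` {k,l}"
    using inj ge3 by (auto simp: inj_eq)
  have v: "v \<notin> {i,j}"
  proof
    assume "v \<in> {i,j}"
    then have "q v \<in> s ` {k,l}" using Pq Ps by blast
    then show False using qv s12 by auto
  qed
  have u: "u \<notin> {k,l}"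
  proof
    assume "u \<in> {k,l}"
    then have "s u \<in> q ` {i,j}" using Pq Ps by blast
    then show False using su q12 by auto
  qed
  have wu: "w u = s u" and wv: "w v = q v"
    using agree_offD[OF ws, of u] agree_offD[OF wq, of v] ge3 \<open>u \<noteq> v\<close> by auto
  have "u \<in> {i,j}"
  proof (rule ccontr)
    assume "u \<notin> {i,j}"
    then have "q u = s u"
      using agree_offD[OF pq(1), of u] agree_offD[OF ps(1), of u] u ge3 by auto
    then show False using su ge3 inj(2) by (auto simp: inj_eq)
  qed
  then obtain c where c: "{i,j} = {u,c}" "c \<noteq> u" "3 \<le> c" using \<open>i \<noteq> j\<close> ge3 by blast
  have agree: "agree_off {1,2,c} w p"
    unfolding agree_off_def
  proof (intro allI impI)
    fix m assume "m \<notin> {1,2,c}"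
    then consider "m = u" | "m = v" | "m \<notin> {1,2,i,j}" "m \<notin> {1,2,u}" using c v by auto
    then show "w m = p m"
      using wu wv u v pq(1) ps(1) wq ge3 by cases (auto simp: agree_off_def)
  qed
  have "w c = q c" using agree_offD[OF wq, of c] c by simp
  moreover have "q c \<in> {p 1, p 2}" using Pq c(1) by auto
  ultimately have "w c \<noteq> p c" using c(3) inj(1) by (auto simp: inj_eq)
  then show ?thesis using agree c(1) by auto
qed

lemma AG_common_nbrs_subset:
  assumes indep: "AG_indep n {p, q, s}" and "p \<noteq> q" "p \<noteq> s" "q \<noteq> s"
    and two: "card (AG_nbrs n p \<inter> AG_nbrs n q) = 2" "card (AG_nbrs n p \<inter> AG_nbrs n s) = 2"
  shows "AG_nbrs n q \<inter> AG_nbrs n s \<subseteq> AG_nbrs n p"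
proof
  fix w assume w: "w \<in> AG_nbrs n q \<inter> AG_nbrs n s"
  have "AG_indep n {p, q}" "AG_indep n {p, s}" "AG_indep n {q, s}"
    using indep by (auto elim: AG_indep_subset)
  then have p: "p \<in> alt_perms n" and pqs: "inj p" "inj q" "inj s"
    by (auto simp: AG_indep_def dest: alt_perms_D(4))
  obtain i j where ij: "i \<in> {3..n}" "j \<in> {3..n}" "i \<noteq> j" "agree_off {1,2,i,j} p q"
    "q i \<in> {p 1, p 2}" "q j \<in> {p 1, p 2}"
    using AG_common_nbrs_card_2[OF \<open>AG_indep n {p, q}\<close> \<open>p \<noteq> q\<close> two(1)] by metis
  obtain k l where kl: "k \<in> {3..n}" "l \<in> {3..n}" "k \<noteq> l" "agree_off {1,2,k,l} p s"
    "s k \<in> {p 1, p 2}" "s l \<in> {p 1, p 2}"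
    using AG_common_nbrs_card_2[OF \<open>AG_indep n {p, s}\<close> \<open>p \<noteq> s\<close> two(2)] by metis
  obtain u v where uv: "u \<in> {3..n}" "v \<in> {3..n}" "u \<noteq> v"
    "agree_off {1,2,u} w q" "agree_off {1,2,v} w s" "s u \<in> {q 1, q 2}" "q v \<in> {s 1, s 2}"
    using AG_common_nbr_indices[OF \<open>AG_indep n {q, s}\<close> \<open>q \<noteq> s\<close> w] by metis
  have ge3: "3 \<le> i" "3 \<le> j" "3 \<le> k" "3 \<le> l" "3 \<le> u" "3 \<le> v"
    using ij kl uv by auto
  obtain c where "c \<in> {i,j}" "agree_off {1,2,c} w p" "w c \<noteq> p c"
    using agree_off_common_nbr[OF pqs ge3 ij(3) kl(3) uv(3) ij(4-6) kl(4-6) uv(4-7)] by blast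
  moreover have "w \<in> alt_perms n" using w by (auto simp: AG_nbrs_def AG_adj_def)
  ultimately show "w \<in> AG_nbrs n p"
    using p ij by (auto simp: AG_nbrs_def AG_adj_iff_agree_off)
qed

lemma card_Un3_lower_bound:
  fixes A B C :: "'a set"
  assumes "finite A" "finite B" "finite C"
    and "card (A \<inter> B) \<le> 2" "card (A \<inter> C) \<le> 2" "card (B \<inter> C) \<le> 2"
    and "card (A \<inter> B) = 2 \<Longrightarrow> card (A \<inter> C) = 2 \<Longrightarrow> B \<inter> C \<subseteq> A"
    and "card (A \<inter> B) = 2 \<Longrightarrow> card (B \<inter> C) = 2 \<Longrightarrow> A \<inter> C \<subseteq> B"
    and "card (A \<inter> C) = 2 \<Longrightarrow> card (B \<inter> C) = 2 \<Longrightarrow> A \<inter> B \<subseteq> C"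
  shows "card A + card B + card C \<le> card (A \<union> B \<union> C) + 4"
proof -
  have "(A \<inter> C) \<union> (B \<inter> C) = (A \<union> B) \<inter> C" "(A \<inter> C) \<inter> (B \<inter> C) = A \<inter> B \<inter> C"
    by blast+
  then have "card (A \<inter> C) + card (B \<inter> C) = card ((A \<union> B) \<inter> C) + card (A \<inter> B \<inter> C)"
    using card_Un_Int[of "A \<inter> C" "B \<inter> C"] assms(3) by simp
  moreover have "card A + card B = card (A \<union> B) + card (A \<inter> B)"
    using assms(1,2) by (rule card_Un_Int)
  moreover have "card (A \<union> B) + card C = card (A \<union> B \<union> C) + card ((A \<union> B) \<inter> C)"
    using assms(1-3) by (intro card_Un_Int) simp_all
  ultimately have ie: "card A + card B + card C + card (A \<inter> B \<inter> C)
      = card (A \<union> B \<union> C) + card (A \<inter> B) + card (A \<inter> C) + card (B \<inter> C)"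
    by linarith
  consider "card (A \<inter> B) = 2" "card (A \<inter> C) = 2" | "card (A \<inter> B) = 2" "card (B \<inter> C) = 2"
    | "card (A \<inter> C) = 2" "card (B \<inter> C) = 2"
    | "card (A \<inter> B) + card (A \<inter> C) + card (B \<inter> C) \<le> 4"
    using assms(4-6) by linarith
  then show ?thesis
  proof cases
    case 1
    then have "A \<inter> B \<inter> C = B \<inter> C" using assms(7) by blast
    then show ?thesis using ie 1 by simp
  next
    case 2
    then have "A \<inter> B \<inter> C = A \<inter> C" using assms(8) by blast
    then show ?thesis using ie 2 by simp
  next
    case 3
    then have "A \<inter> B \<inter> C = A \<inter> B" using assms(9) by blast
    then show ?thesis using ie 3 by simp
  qed (use ie in linarith)
qed

lemma card_Un3_sum_le:
  fixes A B C D :: "'a set"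
  assumes "finite A" "finite B" "finite C" "finite D"
  shows "card (A \<union> B \<union> C) + card (A \<union> B \<union> D) + card (A \<union> C \<union> D) + card (B \<union> C \<union> D)
       \<le> 2 * card (A \<union> B \<union> C \<union> D) + card A + card B + card C + card D"
proof -
  let ?U = "A \<union> B \<union> C \<union> D"
  let ?ind = "\<lambda>X x. of_bool (x \<in> X) :: nat"
  have card_eq: "card X = (\<Sum>x\<in>?U. ?ind X x)" if "X \<subseteq> ?U" for X
    using that assms by (simp add: Int_absorb1)
  have "(\<Sum>x\<in>?U. ?ind (A \<union> B \<union> C) x + ?ind (A \<union> B \<union> D) x + ?ind (A \<union> C \<union> D) x
        + ?ind (B \<union> C \<union> D) x)
      \<le> (\<Sum>x\<in>?U. 2 * ?ind ?U x + ?ind A x + ?ind B x + ?ind C x + ?ind D x)"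
    by (rule sum_mono) auto
  then show ?thesis
    by (simp only: sum.distrib Un_least Un_upper1 Un_upper2 le_supI1 flip: sum_distrib_left card_eq)
qed

lemma AG_nbhd_eq_UN: "AG_indep n S \<Longrightarrow> AG_nbhd n S = (\<Union>p\<in>S. AG_nbrs n p)"
  unfolding AG_indep_def AG_nbhd_def AG_nbrs_def AG_adj_def by blast

lemma card_AG_nbrs_Un3:
  assumes indep: "AG_indep n {a, b, c}" and "a \<noteq> b" "a \<noteq> c" "b \<noteq> c"
  shows "6 * (n - 2) \<le> card (AG_nbrs n a \<union> AG_nbrs n b \<union> AG_nbrs n c) + 4"
proof -
  have alt: "a \<in> alt_perms n" "b \<in> alt_perms n" "c \<in> alt_perms n"
    using indep by (auto simp: AG_indep_def)
  have pairs: "AG_indep n {a, b}" "AG_indep n {a, c}" "AG_indep n {b, c}"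
    using indep by (auto elim: AG_indep_subset)
  have "card (AG_nbrs n a) + card (AG_nbrs n b) + card (AG_nbrs n c)
      \<le> card (AG_nbrs n a \<union> AG_nbrs n b \<union> AG_nbrs n c) + 4"
  proof (rule card_Un3_lower_bound)
    show "AG_nbrs n b \<inter> AG_nbrs n c \<subseteq> AG_nbrs n a"
      if "card (AG_nbrs n a \<inter> AG_nbrs n b) = 2" "card (AG_nbrs n a \<inter> AG_nbrs n c) = 2"
      using AG_common_nbrs_subset[OF indep] assms that by blast
    show "AG_nbrs n a \<inter> AG_nbrs n c \<subseteq> AG_nbrs n b"
      if "card (AG_nbrs n a \<inter> AG_nbrs n b) = 2" "card (AG_nbrs n b \<inter> AG_nbrs n c) = 2"
      using AG_common_nbrs_subset[of n b a c] indep assms that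
      by (simp add: insert_commute Int_commute)
    show "AG_nbrs n a \<inter> AG_nbrs n b \<subseteq> AG_nbrs n c"
      if "card (AG_nbrs n a \<inter> AG_nbrs n c) = 2" "card (AG_nbrs n b \<inter> AG_nbrs n c) = 2"
      using AG_common_nbrs_subset[of n c a b] indep assms that
      by (simp add: insert_commute Int_commute)
  qed (use alt pairs assms in \<open>simp_all add: finite_AG_nbrs card_AG_common_nbrs_le\<close>)
  then show ?thesis using alt by (simp add: card_AG_nbrs)
qed

lemma card_AG_nbhd_3:
  assumes "AG_indep n S" "card S = 3"
  shows "6 * (n - 2) \<le> card (AG_nbhd n S) + 4"
proof -
  obtain a b c where S: "S = {a, b, c}" "a \<noteq> b" "b \<noteq> c" "a \<noteq> c"
    using \<open>card S = 3\<close> by (auto simp: card_3_iff)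
  then show ?thesis
    using card_AG_nbrs_Un3[of n a b c] assms(1) by (simp add: AG_nbhd_eq_UN Un_assoc)
qed

lemma card_AG_nbhd_4:
  assumes indep: "AG_indep n S" and "card S = 4"
  shows "8 * (n - 2) \<le> card (AG_nbhd n S) + 8"
proof -
  obtain a b c d where S: "S = {a, b, c, d}" "a \<noteq> b" "a \<noteq> c" "a \<noteq> d" "b \<noteq> c" "b \<noteq> d" "c \<noteq> d"
    using \<open>card S = 4\<close> by (auto simp: numeral_eq_Suc card_Suc_eq)
  have alt: "a \<in> alt_perms n" "b \<in> alt_perms n" "c \<in> alt_perms n" "d \<in> alt_perms n"
    using indep S by (auto simp: AG_indep_def)
  have "AG_indep n {a, b, c}" "AG_indep n {a, b, d}" "AG_indep n {a, c, d}" "AG_indep n {b, c, d}"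
    using indep S by (auto elim: AG_indep_subset)
  then have "6 * (n - 2) \<le> card (AG_nbrs n a \<union> AG_nbrs n b \<union> AG_nbrs n c) + 4"
    "6 * (n - 2) \<le> card (AG_nbrs n a \<union> AG_nbrs n b \<union> AG_nbrs n d) + 4"
    "6 * (n - 2) \<le> card (AG_nbrs n a \<union> AG_nbrs n c \<union> AG_nbrs n d) + 4"
    "6 * (n - 2) \<le> card (AG_nbrs n b \<union> AG_nbrs n c \<union> AG_nbrs n d) + 4"
    using S by (auto intro: card_AG_nbrs_Un3)
  moreover note card_Un3_sum_le[OF finite_AG_nbrs[OF alt(1)] finite_AG_nbrs[OF alt(2)]
      finite_AG_nbrs[OF alt(3)] finite_AG_nbrs[OF alt(4)]]
  moreover have "AG_nbhd n S = AG_nbrs n a \<union> AG_nbrs n b \<union> AG_nbrs n c \<union> AG_nbrs n d"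
    using indep S by (simp add: AG_nbhd_eq_UN Un_assoc)
  ultimately show ?thesis using alt by (simp add: card_AG_nbrs)
qed

theorem lemma6:
  fixes n :: nat and S :: "(nat \<Rightarrow> nat) set"
  assumes "n \<ge> 4" and "AG_indep n S"
  shows "(card S = 3 \<longrightarrow> card (AG_nbhd n S) \<ge> 6 * n - 16) \<and>
         (card S = 4 \<longrightarrow> card (AG_nbhd n S) \<ge> 8 * n - 24)"
  using card_AG_nbhd_3[OF assms(2)] card_AG_nbhd_4[OF assms(2)] assms(1) by auto

end
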